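(* Let $a,b,c,n_1,n_2,n_3,\ell$ be integers with $n_1a+n_2b+n_3c=0$ and $n_1^2+n_2^2+n_3^2=\ell^2$, and put $u'=(a,b,c)$, $n=(n_1,n_2,n_3)$. Then there exists $v=(a',b',c')\in\mathbb{Z}^3$ such that $\ell u'$ and $v$ define a lattice square in the plane with normal $n$; that is, $v\cdot n=0$, $v\cdot(\ell u')=0$ and $|v|=|\ell u'|$.
   Context: $\cdot$ and $|\cdot|$ denote the standard dot product and Euclidean norm in $\mathbb{R}^3$. *)

theory Defs
  imports "HOL-Analysis.Analysis"
begin

definition ivec3 :: "int \<Rightarrow> int \<Rightarrow> int \<Rightarrow> real^3" where
  "ivec3 x y z = vector [real_of_int x, real_of_int y, real_of_int z]"

end

theory Submission
  imports Defs "HOL-Analysis.Cross3"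
begin

text \<open>The witness is the cross product \<open>v = n \<times> u'\<close>, which has integer coordinates and is
  orthogonal to \<open>n\<close> and to \<open>u'\<close>. By Lagrange's identity
  \<open>|n \<times> u'|\<^sup>2 = |n|\<^sup>2 |u'|\<^sup>2 - (n \<cdot> u')\<^sup>2 = \<ell>\<^sup>2 |u'|\<^sup>2\<close>, so \<open>|v| = |\<ell> u'|\<close>.\<close>

unbundle cross3_syntax

lemma cross_ivec3:
  "ivec3 x y z \<times> ivec3 p q r = ivec3 (y*r - z*q) (z*p - x*r) (x*q - y*p)"
  unfolding ivec3_def cross3_def by (simp add: vector_3)

lemma inner_ivec3: "ivec3 x y z \<bullet> ivec3 p q r = real_of_int (x*p + y*q + z*r)"
  unfolding ivec3_def inner_vec_def by (simp add: sum_3 vector_3)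

lemma norm_ivec3_power2: "(norm (ivec3 x y z))\<^sup>2 = real_of_int (x\<^sup>2 + y\<^sup>2 + z\<^sup>2)"
  unfolding power2_norm_eq_inner inner_ivec3 by (simp add: power2_eq_square)

lemma norm_cross_orthogonal:
  fixes x y :: "real^3"
  assumes "x \<bullet> y = 0"
  shows "norm (x \<times> y) = norm x * norm y"
proof -
  have "(norm (x \<times> y))\<^sup>2 = (norm x * norm y)\<^sup>2"
    using norm_cross_dot[of x y] assms by simp
  then show ?thesis
    by (simp add: power2_eq_iff_nonneg)
qed

theorem theorem2p3:
  fixes a b c n1 n2 n3 l :: int
  assumes "n1 * a + n2 * b + n3 * c = 0"
    and "n1^2 + n2^2 + n3^2 = l^2"
  shows "\<exists>a' b' c' :: int.
           ivec3 a' b' c' \<bullet> ivec3 n1 n2 n3 = 0 \<and>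
           ivec3 a' b' c' \<bullet> (of_int l *\<^sub>R ivec3 a b c) = 0 \<and>
           norm (ivec3 a' b' c') = norm (of_int l *\<^sub>R ivec3 a b c)"
proof -
  define n u where "n = ivec3 n1 n2 n3" and "u = ivec3 a b c"
  have "n \<bullet> u = 0"
    using assms(1) by (simp add: n_def u_def inner_ivec3)
  moreover have "norm n = \<bar>of_int l\<bar>"
    using norm_ivec3_power2[of n1 n2 n3] assms(2) unfolding n_def
    by (metis of_int_power real_sqrt_abs real_sqrt_unique norm_ge_zero)
  ultimately have "norm (n \<times> u) = norm (of_int l *\<^sub>R u)"
    by (simp add: norm_cross_orthogonal)
  moreover have "(n \<times> u) \<bullet> n = 0" "(n \<times> u) \<bullet> (of_int l *\<^sub>R u) = 0"
    by (simp_all add: dot_cross_self inner_commute)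
  ultimately show ?thesis
    unfolding n_def u_def cross_ivec3 by blast
qed

end
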